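(* Let $\mathcal M=(M,<,+,0,\ldots)$ be a definably complete locally o-minimal expansion of an ordered group. Let $(X,\tau)$ be a definably compact definable topological space and $\{U_t: t\in P\}$ a definable family of definable open subsets of $X$ with $X=\bigcup_{t\in P}U_t$. Then there exists a definable bounded subset $Q$ of $P$ such that $X=\bigcup_{t\in Q}U_t$.
   Context: "Definable" means definable in $\mathcal M$ with parameters. $\mathcal M$ is an expansion of an ordered group with dense order without endpoints; locally o-minimal: for every definable $Y\subseteq M$ and $a\in M$ there is an open interval $I\ni a$ with $Y\cap I$ a finite union of points and open intervals; definably complete: every definable subset of $M$ has sup and inf in $M\cup\{\pm\infty\}$. A family $\{U_t:t\in P\}$ is definable if $P\subseteq M^n$ and $\bigcup_t\{t\}\times U_t$ are definable; "bounded" for $Q\subseteq P\subseteq M^n$ means bounded in $M^n$. A definable topological space is a definable set with a topology having a definable family as open base; it is definably compact if every definable filtered family (for any two members some member lies in their intersection) of nonempty closed subsets has nonempty intersection. *)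

theory Defs
  imports "HOL-Analysis.Analysis"
begin

text \<open>The sets of S are exactly the sets
  definable (with parameters) in some expansion of (M,<,+), once S contains
  the singletons, the order and the graph of +.\<close>

definition Mpow :: "nat \<Rightarrow> 'a list set" where
  "Mpow n = {xs. length xs = n}"

definition is_structure :: "(nat \<Rightarrow> 'a list set set) \<Rightarrow> bool" where
  "is_structure S \<longleftrightarrow>
     (\<forall>n. \<forall>A\<in>S n. A \<subseteq> Mpow n) \<and>
     (\<forall>n. Mpow n \<in> S n) \<and>
     (\<forall>n. \<forall>A\<in>S n. Mpow n - A \<in> S n) \<and>
     (\<forall>n. \<forall>A\<in>S n. \<forall>B\<in>S n. A \<union> B \<in> S n) \<and>
     (\<forall>n. \<forall>A\<in>S n. {y # xs | y xs. xs \<in> A} \<in> S (Suc n)) \<and>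
     (\<forall>n. \<forall>A\<in>S n. {xs @ [y] | xs y. xs \<in> A} \<in> S (Suc n)) \<and>
     (\<forall>n\<ge>1. {xs \<in> Mpow n. hd xs = last xs} \<in> S n) \<and>
     (\<forall>n. \<forall>A\<in>S (Suc n). butlast ` A \<in> S n)"

definition expansion_of_ordered_group :: "(nat \<Rightarrow> ('a::{linorder,group_add}) list set set) \<Rightarrow> bool" where
  "expansion_of_ordered_group S \<longleftrightarrow>
     is_structure S \<and>
     (\<forall>a. {[a]} \<in> S 1) \<and>
     {[x, y] | x y. x < y} \<in> S 2 \<and>
     {[x, y, x + y] | x y. True} \<in> S 3"

definition ordered_group_dense_no_endpoints :: "'a::{linorder,group_add} itself \<Rightarrow> bool" where
  "ordered_group_dense_no_endpoints _ \<longleftrightarrow>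
     (\<forall>x y z::'a. x < y \<longrightarrow> x + z < y + z \<and> z + x < z + y) \<and>
     (\<forall>x y::'a. x < y \<longrightarrow> (\<exists>z. x < z \<and> z < y)) \<and>
     (\<forall>x::'a. (\<exists>y. y < x) \<and> (\<exists>y. x < y))"

definition finite_union_points_intervals :: "('a::linorder) set \<Rightarrow> bool" where
  "finite_union_points_intervals A \<longleftrightarrow>
     (\<exists>F G. finite F \<and> finite G \<and> A = F \<union> (\<Union>(c,d)\<in>G. {c<..<d}))"

definition locally_o_minimal :: "(nat \<Rightarrow> ('a::linorder) list set set) \<Rightarrow> bool" where
  "locally_o_minimal S \<longleftrightarrow>
     (\<forall>Y\<in>S 1. \<forall>a. \<exists>l u. l < a \<and> a < u \<and>
        finite_union_points_intervals ({y. [y] \<in> Y} \<inter> {l<..<u}))"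

definition definably_complete :: "(nat \<Rightarrow> ('a::linorder) list set set) \<Rightarrow> bool" where
  "definably_complete S \<longleftrightarrow>
     (\<forall>Y\<in>S 1. let Y' = {y. [y] \<in> Y} in
        (Y' \<noteq> {} \<and> (\<exists>b. \<forall>y\<in>Y'. y \<le> b) \<longrightarrow>
           (\<exists>s. (\<forall>y\<in>Y'. y \<le> s) \<and> (\<forall>b. (\<forall>y\<in>Y'. y \<le> b) \<longrightarrow> s \<le> b))) \<and>
        (Y' \<noteq> {} \<and> (\<exists>b. \<forall>y\<in>Y'. b \<le> y) \<longrightarrow>
           (\<exists>s. (\<forall>y\<in>Y'. s \<le> y) \<and> (\<forall>b. (\<forall>y\<in>Y'. b \<le> y) \<longrightarrow> b \<le> s))))"

definition definable_family ::
    "(nat \<Rightarrow> 'a list set set) \<Rightarrow> nat \<Rightarrow> nat \<Rightarrow> 'a list set \<Rightarrow> ('a list \<Rightarrow> 'a list set) \<Rightarrow> bool" where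
  "definable_family S n m P U \<longleftrightarrow>
     P \<in> S n \<and> (\<forall>t\<in>P. U t \<subseteq> Mpow m) \<and> {t @ x | t x. t \<in> P \<and> x \<in> U t} \<in> S (n + m)"

definition definable_top_space ::
    "(nat \<Rightarrow> 'a list set set) \<Rightarrow> nat \<Rightarrow> 'a list topology \<Rightarrow> bool" where
  "definable_top_space S m T \<longleftrightarrow>
     topspace T \<in> S m \<and>
     (\<exists>k \<Sigma> B. definable_family S k m \<Sigma> B \<and>
        (\<forall>s\<in>\<Sigma>. openin T (B s)) \<and>
        (\<forall>W. openin T W \<longrightarrow> (\<forall>x\<in>W. \<exists>s\<in>\<Sigma>. x \<in> B s \<and> B s \<subseteq> W)))"

definition definably_compact ::
    "(nat \<Rightarrow> 'a list set set) \<Rightarrow> nat \<Rightarrow> 'a list topology \<Rightarrow> bool" where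
  "definably_compact S m T \<longleftrightarrow>
     (\<forall>k \<Sigma> C. definable_family S k m \<Sigma> C \<and> \<Sigma> \<noteq> {} \<and>
        (\<forall>s\<in>\<Sigma>. closedin T (C s) \<and> C s \<noteq> {}) \<and>
        (\<forall>s1\<in>\<Sigma>. \<forall>s2\<in>\<Sigma>. \<exists>s3\<in>\<Sigma>. C s3 \<subseteq> C s1 \<inter> C s2)
        \<longrightarrow> {x \<in> topspace T. \<forall>s\<in>\<Sigma>. x \<in> C s} \<noteq> {})"

definition bounded_in_Mpow :: "nat \<Rightarrow> ('a::linorder) list set \<Rightarrow> bool" where
  "bounded_in_Mpow n Q \<longleftrightarrow> (\<exists>a b. \<forall>t\<in>Q. \<forall>i<n. a < t ! i \<and> t ! i < b)"

end

theory Submission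
  imports Defs
begin

(* For a < b let C(a, b) be the set of points of X not covered by the U t with t in the open box
   (a, b)^n.  These sets are closed, form a definable family indexed by {(a, b). a < b}, and the
   family is filtered because enlarging the box shrinks C(a, b).  If no bounded definable
   subfamily covered X, every C(a, b) would be nonempty, and definable compactness would give a
   point x lying in all of them; but x lies in some U t, and t lies in some box. *)

definition definable_pred :: "(nat \<Rightarrow> 'a list set set) \<Rightarrow> nat \<Rightarrow> ('a list \<Rightarrow> bool) \<Rightarrow> bool" where
  "definable_pred S k \<phi> \<longleftrightarrow> {ys \<in> Mpow k. \<phi> ys} \<in> S k"

lemma definable_pred_equiv:
  assumes "definable_pred S k \<phi>" and "\<And>ys. length ys = k \<Longrightarrow> \<phi> ys \<longleftrightarrow> \<psi> ys"
  shows "definable_pred S k \<psi>"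
proof -
  have "{ys \<in> Mpow k. \<phi> ys} = {ys \<in> Mpow k. \<psi> ys}"
    using assms(2) by (auto simp: Mpow_def)
  then show ?thesis
    using assms(1) by (simp add: definable_pred_def)
qed

context
  fixes S :: "nat \<Rightarrow> 'a list set set"
  assumes S: "is_structure S"
begin

lemma structure_subset_Mpow: "A \<in> S n \<Longrightarrow> A \<subseteq> Mpow n"
  using S unfolding is_structure_def by blast

lemma definable_pred_mem_iff:
  assumes "A \<subseteq> Mpow k"
  shows "definable_pred S k (\<lambda>ys. ys \<in> A) \<longleftrightarrow> A \<in> S k"
proof -
  have "{ys \<in> Mpow k. ys \<in> A} = A"
    using assms by blast
  then show ?thesis
    by (simp add: definable_pred_def)
qed

lemma definable_pred_mem: "A \<in> S k \<Longrightarrow> definable_pred S k (\<lambda>ys. ys \<in> A)"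
  using definable_pred_mem_iff structure_subset_Mpow by blast

lemma definable_pred_True: "definable_pred S k (\<lambda>_. True)"
  using S unfolding is_structure_def definable_pred_def by simp

lemma definable_pred_Not:
  assumes "definable_pred S k \<phi>"
  shows "definable_pred S k (\<lambda>ys. \<not> \<phi> ys)"
proof -
  have "Mpow k - {ys \<in> Mpow k. \<phi> ys} \<in> S k"
    using S assms unfolding is_structure_def definable_pred_def by blast
  moreover have "Mpow k - {ys \<in> Mpow k. \<phi> ys} = {ys \<in> Mpow k. \<not> \<phi> ys}"
    by blast
  ultimately show ?thesis
    by (simp add: definable_pred_def)
qed

lemma definable_pred_disj:
  assumes "definable_pred S k \<phi>" and "definable_pred S k \<psi>"
  shows "definable_pred S k (\<lambda>ys. \<phi> ys \<or> \<psi> ys)"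
proof -
  have "{ys \<in> Mpow k. \<phi> ys} \<union> {ys \<in> Mpow k. \<psi> ys} \<in> S k"
    using S assms unfolding is_structure_def definable_pred_def by blast
  moreover have "{ys \<in> Mpow k. \<phi> ys} \<union> {ys \<in> Mpow k. \<psi> ys} = {ys \<in> Mpow k. \<phi> ys \<or> \<psi> ys}"
    by blast
  ultimately show ?thesis
    by (simp add: definable_pred_def)
qed

lemma definable_pred_conj:
  assumes "definable_pred S k \<phi>" and "definable_pred S k \<psi>"
  shows "definable_pred S k (\<lambda>ys. \<phi> ys \<and> \<psi> ys)"
  using definable_pred_Not[OF definable_pred_disj[OF definable_pred_Not definable_pred_Not]] assms
  by simp

lemma definable_pred_All_less:
  fixes N :: nat
  assumes "\<And>i. i < N \<Longrightarrow> definable_pred S k (\<phi> i)"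
  shows "definable_pred S k (\<lambda>ys. \<forall>i<N. \<phi> i ys)"
  using assms
proof (induction N)
  case 0
  then show ?case
    using definable_pred_True by simp
next
  case (Suc N)
  then have "definable_pred S k (\<lambda>ys. \<phi> N ys \<and> (\<forall>i<N. \<phi> i ys))"
    by (intro definable_pred_conj) auto
  then show ?case
    by (simp only: All_less_Suc)
qed

lemma definable_pred_drop:
  assumes "A \<in> S n"
  shows "definable_pred S (k + n) (\<lambda>xs. drop k xs \<in> A)"
proof (induction k)
  case 0
  then show ?case
    using definable_pred_mem[OF assms] by simp
next
  case (Suc k)
  then have "{y # xs | y xs. xs \<in> {xs \<in> Mpow (k + n). drop k xs \<in> A}} \<in> S (Suc (k + n))"
    using S unfolding is_structure_def definable_pred_def by blast
  moreover have "{y # xs | y xs. xs \<in> {xs \<in> Mpow (k + n). drop k xs \<in> A}}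
      = {xs \<in> Mpow (Suc k + n). drop (Suc k) xs \<in> A}"
    by (auto simp: Mpow_def) (metis drop_Suc_Cons length_Suc_conv)
  ultimately show ?case
    by (simp add: definable_pred_def)
qed

lemma definable_pred_take:
  assumes "A \<in> S n"
  shows "definable_pred S (n + k) (\<lambda>xs. take n xs \<in> A)"
proof (induction k)
  case 0
  have "definable_pred S n (\<lambda>xs. take n xs \<in> A)"
    by (rule definable_pred_equiv[OF definable_pred_mem[OF assms]]) simp
  then show ?case
    by simp
next
  case (Suc k)
  then have "{xs @ [y] | xs y. xs \<in> {xs \<in> Mpow (n + k). take n xs \<in> A}} \<in> S (Suc (n + k))"
    using S unfolding is_structure_def definable_pred_def by blast
  moreover have "{xs @ [y] | xs y. xs \<in> {xs \<in> Mpow (n + k). take n xs \<in> A}}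
      = {xs \<in> Mpow (n + Suc k). take n xs \<in> A}"
  proof (intro set_eqI iffI)
    fix ws :: "'a list"
    assume ws: "ws \<in> {xs \<in> Mpow (n + Suc k). take n xs \<in> A}"
    then have "ws = butlast ws @ [last ws]"
      by (intro append_butlast_last_id[symmetric]) (auto simp: Mpow_def)
    moreover have "butlast ws \<in> {xs \<in> Mpow (n + k). take n xs \<in> A}"
      using ws by (auto simp: Mpow_def butlast_conv_take)
    ultimately show "ws \<in> {xs @ [y] | xs y. xs \<in> {xs \<in> Mpow (n + k). take n xs \<in> A}}"
      by blast
  qed (auto simp: Mpow_def)
  ultimately show ?case
    by (simp add: definable_pred_def)
qed

lemma structure_image_take:
  "A \<in> S (n + k) \<Longrightarrow> take n ` A \<in> S n"
proof (induction k arbitrary: A)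
  case 0
  then have "take n ` A = A"
    using structure_subset_Mpow by (force simp: Mpow_def)
  then show ?case
    using 0 by simp
next
  case (Suc k)
  then have "take n ` (butlast ` A) \<in> S n"
    using S Suc.IH unfolding is_structure_def by simp
  moreover have "take n ` (butlast ` A) = take n ` A"
    using structure_subset_Mpow[OF Suc.prems]
    by (force simp: Mpow_def butlast_conv_take image_image)
  ultimately show ?case
    by simp
qed

lemma definable_pred_Ex_append:
  assumes "definable_pred S (k + l) \<phi>"
  shows "definable_pred S k (\<lambda>ys. \<exists>zs. length zs = l \<and> \<phi> (ys @ zs))"
proof -
  have "take k ` {ws \<in> Mpow (k + l). \<phi> ws} \<in> S k"
    using assms structure_image_take by (simp add: definable_pred_def)
  moreover have "take k ` {ws \<in> Mpow (k + l). \<phi> ws} = {ys \<in> Mpow k. \<exists>zs. length zs = l \<and> \<phi> (ys @ zs)}"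
  proof (intro set_eqI iffI)
    fix ys assume "ys \<in> {ys \<in> Mpow k. \<exists>zs. length zs = l \<and> \<phi> (ys @ zs)}"
    then obtain zs where "length ys = k" "length zs = l" "\<phi> (ys @ zs)"
      by (auto simp: Mpow_def)
    then show "ys \<in> take k ` {ws \<in> Mpow (k + l). \<phi> ws}"
      by (auto simp: Mpow_def image_iff intro!: exI[of _ "ys @ zs"])
  next
    fix ys assume "ys \<in> take k ` {ws \<in> Mpow (k + l). \<phi> ws}"
    then obtain ws where "ys = take k ws" "length ws = k + l" "\<phi> ws"
      by (auto simp: Mpow_def)
    then show "ys \<in> {ys \<in> Mpow k. \<exists>zs. length zs = l \<and> \<phi> (ys @ zs)}"
      by (auto simp: Mpow_def intro!: exI[of _ "drop k ws"])
  qed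
  ultimately show ?thesis
    by (simp add: definable_pred_def)
qed

(* The diagonal axiom only compares the first and last coordinates; padding it by cylinders on both
   sides moves these to positions i and j. *)
lemma definable_pred_nth_eq_less:
  assumes ij: "i < j" "j < k"
  shows "definable_pred S k (\<lambda>ys. ys ! i = ys ! j)"
proof -
  define L where "L = Suc (j - i)"
  define Diag :: "'a list set" where "Diag = {xs \<in> Mpow L. hd xs = last xs}"
  have "Diag \<in> S L"
    using S unfolding is_structure_def Diag_def L_def by simp
  then have "{xs \<in> Mpow (L + (k - Suc j)). take L xs \<in> Diag} \<in> S (L + (k - Suc j))"
    using definable_pred_take unfolding definable_pred_def by blast
  moreover have "i + (L + (k - Suc j)) = k"
    using ij unfolding L_def by simp
  ultimately have "definable_pred S k
      (\<lambda>xs. drop i xs \<in> {xs \<in> Mpow (L + (k - Suc j)). take L xs \<in> Diag})"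
    using definable_pred_drop by metis
  then show ?thesis
  proof (rule definable_pred_equiv)
    fix xs :: "'a list"
    assume len: "length xs = k"
    then have "take L (drop i xs) \<noteq> []" and "length (take L (drop i xs)) = L"
      using ij by (auto simp: L_def)
    then have "hd (take L (drop i xs)) = xs ! i" and "last (take L (drop i xs)) = xs ! j"
      using len ij by (auto simp: hd_conv_nth last_conv_nth L_def)
    then show "drop i xs \<in> {xs \<in> Mpow (L + (k - Suc j)). take L xs \<in> Diag} \<longleftrightarrow> xs ! i = xs ! j"
      using len ij by (auto simp: Diag_def Mpow_def L_def)
  qed
qed

lemma definable_pred_nth_eq:
  assumes "i < k" and "j < k"
  shows "definable_pred S k (\<lambda>ys. ys ! i = ys ! j)"
proof -
  consider "i < j" | "i = j" | "j < i"
    by linarith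
  then show ?thesis
  proof cases
    case 3
    then show ?thesis
      using definable_pred_nth_eq_less[of j i] assms by (simp add: eq_commute[of "_ ! j"])
  qed (use definable_pred_nth_eq_less assms definable_pred_True in auto)
qed

(* Adjoin n new coordinates forced to equal ys ! f i, then project them away. *)
lemma definable_pred_reindex:
  assumes A: "A \<in> S n" and f: "\<And>i. i < n \<Longrightarrow> f i < k"
  shows "definable_pred S k (\<lambda>ys. map (\<lambda>i. ys ! f i) [0..<n] \<in> A)"
proof -
  have "definable_pred S (k + n) (\<lambda>ws. drop k ws \<in> A \<and> (\<forall>i<n. ws ! f i = ws ! (k + i)))"
    using f by (intro definable_pred_conj definable_pred_drop[OF A] definable_pred_All_less
        definable_pred_nth_eq) (auto simp: f trans_less_add1)
  then have "definable_pred S k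
      (\<lambda>ys. \<exists>zs. length zs = n \<and> drop k (ys @ zs) \<in> A \<and> (\<forall>i<n. (ys @ zs) ! f i = (ys @ zs) ! (k + i)))"
    by (rule definable_pred_Ex_append)
  moreover have "(\<exists>zs. length zs = n \<and> drop k (ys @ zs) \<in> A \<and> (\<forall>i<n. (ys @ zs) ! f i = (ys @ zs) ! (k + i)))
      \<longleftrightarrow> map (\<lambda>i. ys ! f i) [0..<n] \<in> A" if "length ys = k" for ys :: "'a list"
  proof
    assume "\<exists>zs. length zs = n \<and> drop k (ys @ zs) \<in> A \<and> (\<forall>i<n. (ys @ zs) ! f i = (ys @ zs) ! (k + i))"
    then obtain zs where zs: "length zs = n" "drop k (ys @ zs) \<in> A"
      "\<forall>i<n. (ys @ zs) ! f i = (ys @ zs) ! (k + i)"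
      by blast
    then have "zs \<in> A" and "\<forall>i<n. ys ! f i = zs ! i"
      using that f by (simp_all add: nth_append)
    moreover from this zs(1) have "map (\<lambda>i. ys ! f i) [0..<n] = zs"
      by (intro nth_equalityI) auto
    ultimately show "map (\<lambda>i. ys ! f i) [0..<n] \<in> A"
      by simp
  next
    assume "map (\<lambda>i. ys ! f i) [0..<n] \<in> A"
    then show "\<exists>zs. length zs = n \<and> drop k (ys @ zs) \<in> A \<and> (\<forall>i<n. (ys @ zs) ! f i = (ys @ zs) ! (k + i))"
      using that f by (auto simp: nth_append intro!: exI[of _ "map (\<lambda>i. ys ! f i) [0..<n]"])
  qed
  ultimately show ?thesis
    by (rule definable_pred_equiv)
qed

end

definition restrict_box :: "nat \<Rightarrow> ('a::linorder) list set \<Rightarrow> 'a \<Rightarrow> 'a \<Rightarrow> 'a list set" where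
  "restrict_box n P a b = {t \<in> P. \<forall>i<n. a < t ! i \<and> t ! i < b}"

lemma restrict_box_subset: "restrict_box n P a b \<subseteq> P"
  by (auto simp: restrict_box_def)

lemma bounded_restrict_box: "bounded_in_Mpow n (restrict_box n P a b)"
  by (auto simp: bounded_in_Mpow_def restrict_box_def)

lemma restrict_box_mono: "a' \<le> a \<Longrightarrow> b \<le> b' \<Longrightarrow> restrict_box n P a b \<subseteq> restrict_box n P a' b'"
  by (auto simp: restrict_box_def intro: le_less_trans less_le_trans)

lemma family_graph_append_iff:
  assumes "P \<subseteq> Mpow n" and "length t = n"
  shows "t @ x \<in> {t @ x | t x. t \<in> P \<and> x \<in> U t} \<longleftrightarrow> t \<in> P \<and> x \<in> U t"
  using assms by (auto simp: Mpow_def)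

context
  fixes S :: "nat \<Rightarrow> ('a::{linorder,group_add}) list set set"
  assumes S: "expansion_of_ordered_group S"
begin

lemma expansion_is_structure: "is_structure S"
  using S by (simp add: expansion_of_ordered_group_def)

lemma definable_pred_nth_less:
  assumes "i < k" and "j < k"
  shows "definable_pred S k (\<lambda>ys. ys ! i < ys ! j)"
proof -
  have "definable_pred S k (\<lambda>ys. map (\<lambda>l. ys ! ([i, j] ! l)) [0..<2] \<in> {[x, y] | x y. x < y})"
    using S assms
    by (intro definable_pred_reindex[OF expansion_is_structure])
      (auto simp: expansion_of_ordered_group_def less_2_cases_iff)
  then show ?thesis
    by (simp add: upt_rec)
qed

lemma definable_pred_nth_eq_const:
  assumes "i < k"
  shows "definable_pred S k (\<lambda>ys. ys ! i = a)"
proof -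
  have "definable_pred S k (\<lambda>ys. map (\<lambda>l. ys ! i) [0..<1] \<in> {[a]})"
    using S assms
    by (intro definable_pred_reindex[OF expansion_is_structure]) (auto simp: expansion_of_ordered_group_def)
  then show ?thesis
    by simp
qed

lemma restrict_box_in:
  assumes P: "P \<in> S n"
  shows "restrict_box n P a b \<in> S n"
proof -
  have "definable_pred S (n + 2) (\<lambda>ws. take n ws \<in> P \<and> ws ! n = a \<and> ws ! Suc n = b \<and>
      (\<forall>i<n. ws ! n < ws ! i \<and> ws ! i < ws ! Suc n))"
    by (intro definable_pred_conj definable_pred_take[OF expansion_is_structure P]
        definable_pred_nth_eq_const definable_pred_All_less definable_pred_nth_less)
      (auto simp: expansion_is_structure)
  then have "definable_pred S n (\<lambda>t. \<exists>zs. length zs = 2 \<and> take n (t @ zs) \<in> P \<and>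
      (t @ zs) ! n = a \<and> (t @ zs) ! Suc n = b \<and>
      (\<forall>i<n. (t @ zs) ! n < (t @ zs) ! i \<and> (t @ zs) ! i < (t @ zs) ! Suc n))"
    by (rule definable_pred_Ex_append[OF expansion_is_structure])
  then have "definable_pred S n (\<lambda>t. t \<in> restrict_box n P a b)"
  proof (rule definable_pred_equiv)
    fix t :: "'a list"
    assume "length t = n"
    then show "(\<exists>zs. length zs = 2 \<and> take n (t @ zs) \<in> P \<and>
        (t @ zs) ! n = a \<and> (t @ zs) ! Suc n = b \<and>
        (\<forall>i<n. (t @ zs) ! n < (t @ zs) ! i \<and> (t @ zs) ! i < (t @ zs) ! Suc n))
      \<longleftrightarrow> t \<in> restrict_box n P a b"
      by (auto simp: restrict_box_def nth_append numeral_2_eq_2 length_Suc_conv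
          intro!: exI[of _ "[a, b]"])
  qed
  moreover have "restrict_box n P a b \<subseteq> Mpow n"
    using restrict_box_subset structure_subset_Mpow[OF expansion_is_structure P] by blast
  ultimately show ?thesis
    using definable_pred_mem_iff[OF expansion_is_structure] by blast
qed

lemma definable_pred_covered_by_box:
  assumes fam: "definable_family S n m P U"
  shows "definable_pred S (2 + m) (\<lambda>ws. \<exists>t\<in>restrict_box n P (ws ! 0) (ws ! 1). drop 2 ws \<in> U t)"
proof -
  define G where "G = {t @ x | t x. t \<in> P \<and> x \<in> U t}"
  \<comment> \<open>rearranges \<open>[a, b] @ x @ t\<close> into \<open>t @ x\<close>, the layout of the graph of \<open>U\<close>\<close>
  define swap where "swap i = (if i < n then 2 + m + i else 2 + (i - n))" for i
  have P: "P \<subseteq> Mpow n" and "G \<in> S (n + m)"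
    using fam structure_subset_Mpow[OF expansion_is_structure]
    by (auto simp: definable_family_def G_def)
  then have "definable_pred S (2 + m + n) (\<lambda>vs. map (\<lambda>i. vs ! swap i) [0..<n + m] \<in> G \<and>
      (\<forall>i<n. vs ! 0 < vs ! (2 + m + i) \<and> vs ! (2 + m + i) < vs ! 1))"
    by (intro definable_pred_conj definable_pred_reindex definable_pred_All_less
        definable_pred_nth_less) (auto simp: swap_def expansion_is_structure)
  then have "definable_pred S (2 + m) (\<lambda>ws. \<exists>t. length t = n \<and>
      map (\<lambda>i. (ws @ t) ! swap i) [0..<n + m] \<in> G \<and>
      (\<forall>i<n. (ws @ t) ! 0 < (ws @ t) ! (2 + m + i) \<and> (ws @ t) ! (2 + m + i) < (ws @ t) ! 1))"
    by (rule definable_pred_Ex_append[OF expansion_is_structure])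
  then show ?thesis
  proof (rule definable_pred_equiv)
    fix ws :: "'a list"
    assume ws: "length ws = 2 + m"
    have "map (\<lambda>i. (ws @ t) ! swap i) [0..<n + m] = t @ drop 2 ws" if "length t = n" for t
      using ws that by (intro nth_equalityI) (auto simp: swap_def nth_append)
    moreover have "(ws @ t) ! 0 = ws ! 0" "(ws @ t) ! 1 = ws ! 1" "(ws @ t) ! (2 + m + i) = t ! i"
      for t and i
      using ws by (simp_all add: nth_append)
    ultimately have "(\<exists>t. length t = n \<and> map (\<lambda>i. (ws @ t) ! swap i) [0..<n + m] \<in> G \<and>
        (\<forall>i<n. (ws @ t) ! 0 < (ws @ t) ! (2 + m + i) \<and> (ws @ t) ! (2 + m + i) < (ws @ t) ! 1))
      \<longleftrightarrow> (\<exists>t. length t = n \<and> t @ drop 2 ws \<in> G \<and> (\<forall>i<n. ws ! 0 < t ! i \<and> t ! i < ws ! 1))"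
      by (metis (no_types, lifting))
    also have "\<dots> \<longleftrightarrow> (\<exists>t\<in>restrict_box n P (ws ! 0) (ws ! 1). drop 2 ws \<in> U t)"
    proof -
      have "t @ drop 2 ws \<in> G \<longleftrightarrow> t \<in> P \<and> drop 2 ws \<in> U t" if "length t = n" for t
        unfolding G_def by (rule family_graph_append_iff[OF P that])
      then show ?thesis
        using P by (auto simp: restrict_box_def Mpow_def)
    qed
    finally show "(\<exists>t. length t = n \<and> map (\<lambda>i. (ws @ t) ! swap i) [0..<n + m] \<in> G \<and>
        (\<forall>i<n. (ws @ t) ! 0 < (ws @ t) ! (2 + m + i) \<and> (ws @ t) ! (2 + m + i) < (ws @ t) ! 1))
      \<longleftrightarrow> (\<exists>t\<in>restrict_box n P (ws ! 0) (ws ! 1). drop 2 ws \<in> U t)" .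
  qed
qed

lemma definable_family_uncovered:
  assumes fam: "definable_family S n m P U" and X: "X \<in> S m"
  shows "definable_family S 2 m {[a, b] | a b. a < b}
           (\<lambda>s. X - (\<Union>t\<in>restrict_box n P (s ! 0) (s ! 1). U t))"
proof -
  define graph where "graph = {s @ x | s x. s \<in> {[a, b] | a b. a < b} \<and>
      x \<in> X - (\<Union>t\<in>restrict_box n P (s ! 0) (s ! 1). U t)}"
  have "definable_pred S (2 + m) (\<lambda>ws. ws ! 0 < ws ! 1 \<and> drop 2 ws \<in> X \<and>
      \<not> (\<exists>t\<in>restrict_box n P (ws ! 0) (ws ! 1). drop 2 ws \<in> U t))"
    by (intro definable_pred_conj definable_pred_nth_less definable_pred_Not
        definable_pred_drop[OF expansion_is_structure X] definable_pred_covered_by_box[OF fam])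
      (auto simp: expansion_is_structure)
  then have "definable_pred S (2 + m) (\<lambda>ws. ws \<in> graph)"
  proof (rule definable_pred_equiv)
    fix ws :: "'a list"
    assume "length ws = 2 + m"
    then obtain a b z where ws: "ws = [a, b] @ z"
      by (metis Suc_length_conv add_2_eq_Suc append_Cons append_Nil)
    show "(ws ! 0 < ws ! 1 \<and> drop 2 ws \<in> X \<and>
        \<not> (\<exists>t\<in>restrict_box n P (ws ! 0) (ws ! 1). drop 2 ws \<in> U t)) \<longleftrightarrow> ws \<in> graph"
      unfolding ws graph_def by (subst family_graph_append_iff) (auto simp: Mpow_def)
  qed
  moreover have "graph \<subseteq> Mpow (2 + m)"
    using structure_subset_Mpow[OF expansion_is_structure X] by (auto simp: graph_def Mpow_def)
  moreover have "{[a, b] | a b. a < b} \<in> S 2"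
    using S by (simp add: expansion_of_ordered_group_def)
  ultimately show ?thesis
    using structure_subset_Mpow[OF expansion_is_structure X] definable_pred_mem_iff[OF expansion_is_structure]
    unfolding definable_family_def graph_def by blast
qed

end

lemma interval_indexed_family_filtered:
  fixes C :: "('a::linorder) list \<Rightarrow> 'b set"
  assumes antitone: "\<And>a b a' b'. a' \<le> a \<Longrightarrow> b \<le> b' \<Longrightarrow> C [a', b'] \<subseteq> C [a, b]"
  shows "\<forall>s1\<in>{[a, b] | a b. a < b}. \<forall>s2\<in>{[a, b] | a b. a < b}.
           \<exists>s3\<in>{[a, b] | a b. a < b}. C s3 \<subseteq> C s1 \<inter> C s2"
proof (intro ballI)
  fix s1 s2 :: "'a list"
  assume "s1 \<in> {[a, b] | a b. a < b}" and "s2 \<in> {[a, b] | a b. a < b}"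
  then obtain a1 b1 a2 b2 where s: "s1 = [a1, b1]" "s2 = [a2, b2]" "a1 < b1" "a2 < b2"
    by blast
  then have "[min a1 a2, max b1 b2] \<in> {[a, b] | a b. a < b}"
    by (auto simp: min_def max_def)
  moreover have "C [min a1 a2, max b1 b2] \<subseteq> C s1 \<inter> C s2"
    unfolding s using antitone by (simp add: le_infI)
  ultimately show "\<exists>s3\<in>{[a, b] | a b. a < b}. C s3 \<subseteq> C s1 \<inter> C s2"
    by blast
qed

lemma ex_interval_around_list:
  assumes "ordered_group_dense_no_endpoints TYPE('a::{linorder,group_add})"
  shows "\<exists>a b::'a. a < b \<and> (\<forall>y\<in>set t. a < y \<and> y < b)"
proof (induction t)
  case Nil
  from assms show ?case
    unfolding ordered_group_dense_no_endpoints_def by auto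
next
  case (Cons y t)
  then obtain a b where "a < b" "\<forall>y\<in>set t. a < y \<and> y < b"
    by blast
  moreover obtain a' b' where "a' < min a y" "max b y < b'"
    using assms unfolding ordered_group_dense_no_endpoints_def by meson
  ultimately show ?case
    by (metis less_trans max_less_iff_conj min_less_iff_conj set_ConsD)
qed

lemma definably_compact_point_outside_box_covers:
  fixes S :: "nat \<Rightarrow> ('a::{linorder,group_add}) list set set"
  assumes dense: "ordered_group_dense_no_endpoints TYPE('a)"
    and S: "expansion_of_ordered_group S"
    and X: "topspace T \<in> S m"
    and compact: "definably_compact S m T"
    and fam: "definable_family S n m P U"
    and open_U: "\<forall>t\<in>P. openin T (U t)"
    and no_box_cover: "\<And>a b. topspace T \<noteq> (\<Union>t\<in>restrict_box n P a b. U t)"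
  shows "\<exists>x\<in>topspace T. \<forall>a b. a < b \<longrightarrow> x \<notin> (\<Union>t\<in>restrict_box n P a b. U t)"
proof -
  let ?\<Sigma> = "{[a, b] | a b. (a::'a) < b}"
  define C where "C = (\<lambda>s. topspace T - (\<Union>t\<in>restrict_box n P (s ! 0) (s ! 1). U t))"
  have "(\<Union>t\<in>restrict_box n P a b. U t) \<subseteq> topspace T" for a b
    using open_U restrict_box_subset by (blast dest: openin_subset)
  then have "C [a, b] \<noteq> {}" for a b
    using no_box_cover[of a b] by (auto simp: C_def)
  moreover have "closedin T (C s)" for s
    unfolding C_def using open_U by (intro closedin_diff closedin_topspace openin_Union)
      (auto simp: restrict_box_def)
  ultimately have "\<forall>s\<in>?\<Sigma>. closedin T (C s) \<and> C s \<noteq> {}"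
    by blast
  moreover have "definable_family S 2 m ?\<Sigma> C"
    unfolding C_def by (rule definable_family_uncovered[OF S fam X])
  moreover have "\<forall>s1\<in>?\<Sigma>. \<forall>s2\<in>?\<Sigma>. \<exists>s3\<in>?\<Sigma>. C s3 \<subseteq> C s1 \<inter> C s2"
  proof (rule interval_indexed_family_filtered)
    fix a b a' b' :: 'a
    assume "a' \<le> a" and "b \<le> b'"
    then show "C [a', b'] \<subseteq> C [a, b]"
      using restrict_box_mono[of a' a b b' n P] by (auto simp: C_def)
  qed
  moreover have "?\<Sigma> \<noteq> {}"
    using ex_interval_around_list[OF dense, of "[]"] by auto
  ultimately obtain x where x: "x \<in> topspace T" "\<forall>s\<in>?\<Sigma>. x \<in> C s"
    using compact unfolding definably_compact_def by blast
  have "x \<in> C [a, b]" if "a < b" for a b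
    using x(2) that by blast
  then show ?thesis
    using x(1) by (auto simp: C_def)
qed

theorem theorem4p22:
  fixes S :: "nat \<Rightarrow> ('a::{linorder,group_add}) list set set"
    and T :: "'a list topology"
    and P :: "'a list set"
    and U :: "'a list \<Rightarrow> 'a list set"
    and m n :: nat
  assumes "ordered_group_dense_no_endpoints TYPE('a)"
    and "expansion_of_ordered_group S"
    and "locally_o_minimal S"
    and "definably_complete S"
    and "definable_top_space S m T"
    and "definably_compact S m T"
    and "definable_family S n m P U"
    and "\<forall>t\<in>P. openin T (U t)"
    and "topspace T = (\<Union>t\<in>P. U t)"
  shows "\<exists>Q. Q \<subseteq> P \<and> Q \<in> S n \<and> bounded_in_Mpow n Q \<and> topspace T = (\<Union>t\<in>Q. U t)"
proof (rule ccontr)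
  assume no_bounded_subcover: "\<not> ?thesis"
  have X: "topspace T \<in> S m" and P: "P \<in> S n" and "P \<subseteq> Mpow n"
    using assms(2,5,7) structure_subset_Mpow[OF expansion_is_structure]
    by (auto simp: definable_top_space_def definable_family_def)
  have "topspace T \<noteq> (\<Union>t\<in>restrict_box n P a b. U t)" for a b
    using no_bounded_subcover restrict_box_subset[of n P a b] restrict_box_in[OF assms(2) P, of a b]
      bounded_restrict_box[of n P a b] by blast
  then obtain x where x: "x \<in> topspace T" "\<forall>a b. a < b \<longrightarrow> x \<notin> (\<Union>t\<in>restrict_box n P a b. U t)"
    using definably_compact_point_outside_box_covers[OF assms(1,2) X assms(6,7,8)] by blast
  then obtain t where t: "t \<in> P" "x \<in> U t"
    using assms(9) by blast
  obtain a b where "a < b" "\<forall>y\<in>set t. a < y \<and> y < b"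
    using ex_interval_around_list[OF assms(1)] by blast
  then have "t \<in> restrict_box n P a b"
    using t \<open>P \<subseteq> Mpow n\<close> by (auto simp: restrict_box_def Mpow_def)
  then show False
    using x t \<open>a < b\<close> by blast
qed

end
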